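(* Let $\mathbb{C}$ and $\mathbb{I}$ be categories. Every parameterised monad on $\mathbb{C}$ indexed by $\mathbb{I}$ is a category-graded monad on $\mathbb{C}$ with a generalised unit; that is, there is an injective assignment sending each parameterised monad $(\mathsf{P}:\mathbb{I}^{\mathsf{op}}\times\mathbb{I}\to[\mathbb{C},\mathbb{C}],\mu^{\mathsf{P}},\eta^{\mathsf{P}})$ to a category-graded monad on $\mathbb{C}$ equipped with a generalised unit.
   Context: A parameterised monad on $\mathbb{C}$ indexed by $\mathbb{I}$ is a functor $\mathsf{P}:\mathbb{I}^{\mathsf{op}}\times\mathbb{I}\to[\mathbb{C},\mathbb{C}]$ with natural transformations $\eta^{\mathsf{P}}_I:\mathsf{Id}\to\mathsf{P}(I,I)$ and $\mu^{\mathsf{P}}_{I,J,K}:\mathsf{P}(I,J)\mathsf{P}(J,K)\to\mathsf{P}(I,K)$ satisfying the unit laws $\mu^{\mathsf{P}}_{I,I,J}\circ\eta^{\mathsf{P}}_I\mathsf{P}(I,J)=\mathrm{id}=\mu^{\mathsf{P}}_{I,J,J}\circ\mathsf{P}(I,J)\eta^{\mathsf{P}}_J$ and associativity $\mu^{\mathsf{P}}_{I,K,L}\circ\mu^{\mathsf{P}}_{I,J,K}\mathsf{P}(K,L)=\mu^{\mathsf{P}}_{I,J,L}\circ\mathsf{P}(I,J)\mu^{\mathsf{P}}_{J,K,L}$, with $\eta^{\mathsf{P}}$ dinatural in $I$ (i.e. $\mathsf{P}(I,f)\circ\eta^{\mathsf{P}}_I=\mathsf{P}(f,J)\circ\eta^{\mathsf{P}}_J$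 for $f:I\to J$) and $\mu^{\mathsf{P}}_{I,J,K}$ natural in $I,K$ and dinatural in $J$ (i.e. $\mu^{\mathsf{P}}_{I,J',K}\circ\mathsf{P}(I,g)\mathsf{P}(J',K)=\mu^{\mathsf{P}}_{I,J,K}\circ\mathsf{P}(I,J)\mathsf{P}(g,K)$ for $g:J\to J'$). A category-graded monad on $\mathbb{C}$ graded by a category $\mathbb{K}$ consists of endofunctors $\mathsf{T}_f$ for morphisms $f:I\to J$ of $\mathbb{K}$, natural transformations $\eta_I:\mathsf{Id}\to\mathsf{T}_{id_I}$ and $\mu_{f,g}:\mathsf{T}_f\mathsf{T}_g\to\mathsf{T}_{g\circ f}$ ($f:I\to J$, $g:J\to K$) with $\mu_{id_J,f}\circ\eta_J\mathsf{T}_f=\mathrm{id}_{\mathsf{T}_f}=\mu_{f,id_I}\circ\mathsf{T}_f\eta_I$ and $\mu_{g\circ f,h}\circ\mu_{f,g}\mathsf{T}_h=\mu_{f,h\circ g}\circ\mathsf{T}_f\mu_{g,h}$. A generalised unit for such a category-graded monad consists of a wide subcategory $\mathbb{S}\subseteq\mathbb{K}$ (same objects as $\mathbb{K}$) and natural transformations $\bar\eta_f:\mathsf{Id}\to\mathsf{T}_f$ for every morphism $f$ of $\mathbb{S}$, such that $\mu_{f,g}\circ\mathsf{T}_f\bar\eta_g\circ\bar\eta_f=\bar\eta_{g\circ f}$ for composable $f,g$ in $\mathbb{S}$ and $\bar\eta_{id_I}=\eta_I$ for every object $I$ (equivalently, a right lax natural transformation from the identity category-graded monad to $\mathsf{T}$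 restricted to $\mathbb{S}$, with identity component functors). *)

theory Defs
  imports Main
begin

record ('o,'a) cat =
  c_obj  :: "'o set"
  c_arr  :: "'a set"
  c_dom  :: "'a \<Rightarrow> 'o"
  c_cod  :: "'a \<Rightarrow> 'o"
  c_id   :: "'o \<Rightarrow> 'a"
  c_comp :: "'a \<Rightarrow> 'a \<Rightarrow> 'a"   (* c_comp C g f = g \<circ> f, defined when cod f = dom g *)

definition category :: "('o,'a) cat \<Rightarrow> bool" where
  "category C \<longleftrightarrow>
     (\<forall>f\<in>c_arr C. c_dom C f \<in> c_obj C \<and> c_cod C f \<in> c_obj C) \<and>
     (\<forall>x\<in>c_obj C. c_id C x \<in> c_arr C \<and> c_dom C (c_id C x) = x \<and> c_cod C (c_id C x) = x) \<and>
     (\<forall>f\<in>c_arr C. \<forall>g\<in>c_arr C. c_cod C f = c_dom C g \<longrightarrow>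
        c_comp C g f \<in> c_arr C \<and> c_dom C (c_comp C g f) = c_dom C f \<and>
        c_cod C (c_comp C g f) = c_cod C g) \<and>
     (\<forall>f\<in>c_arr C. c_comp C (c_id C (c_cod C f)) f = f \<and> c_comp C f (c_id C (c_dom C f)) = f) \<and>
     (\<forall>f\<in>c_arr C. \<forall>g\<in>c_arr C. \<forall>h\<in>c_arr C. c_cod C f = c_dom C g \<longrightarrow> c_cod C g = c_dom C h \<longrightarrow>
        c_comp C h (c_comp C g f) = c_comp C (c_comp C h g) f)"

type_synonym ('o,'a) efun = "('o \<Rightarrow> 'o) \<times> ('a \<Rightarrow> 'a)"

abbreviation fo :: "('o,'a) efun \<Rightarrow> 'o \<Rightarrow> 'o" where "fo F \<equiv> fst F"
abbreviation fa :: "('o,'a) efun \<Rightarrow> 'a \<Rightarrow> 'a" where "fa F \<equiv> snd F"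

definition endofunctor :: "('o,'a) cat \<Rightarrow> ('o,'a) efun \<Rightarrow> bool" where
  "endofunctor C F \<longleftrightarrow>
     (\<forall>x\<in>c_obj C. fo F x \<in> c_obj C) \<and>
     (\<forall>f\<in>c_arr C. fa F f \<in> c_arr C \<and> c_dom C (fa F f) = fo F (c_dom C f) \<and>
                   c_cod C (fa F f) = fo F (c_cod C f)) \<and>
     (\<forall>x\<in>c_obj C. fa F (c_id C x) = c_id C (fo F x)) \<and>
     (\<forall>f\<in>c_arr C. \<forall>g\<in>c_arr C. c_cod C f = c_dom C g \<longrightarrow>
        fa F (c_comp C g f) = c_comp C (fa F g) (fa F f))"

definition Id_fun :: "('o,'a) efun" where "Id_fun = (id, id)"

definition fcomp :: "('o,'a) efun \<Rightarrow> ('o,'a) efun \<Rightarrow> ('o,'a) efun" where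
  "fcomp F G = (fo F \<circ> fo G, fa F \<circ> fa G)"

definition nat_trans :: "('o,'a) cat \<Rightarrow> ('o,'a) efun \<Rightarrow> ('o,'a) efun \<Rightarrow> ('o \<Rightarrow> 'a) \<Rightarrow> bool" where
  "nat_trans C F G \<alpha> \<longleftrightarrow>
     (\<forall>x\<in>c_obj C. \<alpha> x \<in> c_arr C \<and> c_dom C (\<alpha> x) = fo F x \<and> c_cod C (\<alpha> x) = fo G x) \<and>
     (\<forall>f\<in>c_arr C. c_comp C (\<alpha> (c_cod C f)) (fa F f) = c_comp C (fa G f) (\<alpha> (c_dom C f)))"

text \<open>P : I^op \<times> I \<rightarrow> [C,C].  pm_obj P I J is the endofunctor P(I,J); for u : I' \<rightarrow> I and
  v : J \<rightarrow> J' in I, pm_arr P u v is (the components of) P(u,v) : P(I,J) \<rightarrow> P(I',J').\<close>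
record ('io,'ia,'co,'ca) pmonad =
  pm_obj :: "'io \<Rightarrow> 'io \<Rightarrow> ('co,'ca) efun"
  pm_arr :: "'ia \<Rightarrow> 'ia \<Rightarrow> 'co \<Rightarrow> 'ca"
  pm_eta :: "'io \<Rightarrow> 'co \<Rightarrow> 'ca"
  pm_mu  :: "'io \<Rightarrow> 'io \<Rightarrow> 'io \<Rightarrow> 'co \<Rightarrow> 'ca"

definition param_monad :: "('co,'ca) cat \<Rightarrow> ('io,'ia) cat \<Rightarrow> ('io,'ia,'co,'ca) pmonad \<Rightarrow> bool" where
  "param_monad C \<I> P \<longleftrightarrow>
    \<comment> \<open>P is a functor I^op \<times> I \<rightarrow> [C,C]\<close>
    (\<forall>i\<in>c_obj \<I>. \<forall>j\<in>c_obj \<I>. endofunctor C (pm_obj P i j)) \<and>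
    (\<forall>u\<in>c_arr \<I>. \<forall>v\<in>c_arr \<I>.
        nat_trans C (pm_obj P (c_cod \<I> u) (c_dom \<I> v)) (pm_obj P (c_dom \<I> u) (c_cod \<I> v)) (pm_arr P u v)) \<and>
    (\<forall>i\<in>c_obj \<I>. \<forall>j\<in>c_obj \<I>. \<forall>x\<in>c_obj C.
        pm_arr P (c_id \<I> i) (c_id \<I> j) x = c_id C (fo (pm_obj P i j) x)) \<and>
    (\<forall>u\<in>c_arr \<I>. \<forall>u'\<in>c_arr \<I>. \<forall>v\<in>c_arr \<I>. \<forall>v'\<in>c_arr \<I>. \<forall>x\<in>c_obj C.
        c_cod \<I> u' = c_dom \<I> u \<longrightarrow> c_cod \<I> v = c_dom \<I> v' \<longrightarrow>
        pm_arr P (c_comp \<I> u u') (c_comp \<I> v' v) x = c_comp C (pm_arr P u' v' x) (pm_arr P u v x)) \<and>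
    \<comment> \<open>eta and mu are natural transformations\<close>
    (\<forall>i\<in>c_obj \<I>. nat_trans C Id_fun (pm_obj P i i) (pm_eta P i)) \<and>
    (\<forall>i\<in>c_obj \<I>. \<forall>j\<in>c_obj \<I>. \<forall>k\<in>c_obj \<I>.
        nat_trans C (fcomp (pm_obj P i j) (pm_obj P j k)) (pm_obj P i k) (pm_mu P i j k)) \<and>
    \<comment> \<open>unit laws\<close>
    (\<forall>i\<in>c_obj \<I>. \<forall>j\<in>c_obj \<I>. \<forall>x\<in>c_obj C.
        c_comp C (pm_mu P i i j x) (pm_eta P i (fo (pm_obj P i j) x)) = c_id C (fo (pm_obj P i j) x) \<and>
        c_comp C (pm_mu P i j j x) (fa (pm_obj P i j) (pm_eta P j x)) = c_id C (fo (pm_obj P i j) x)) \<and>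
    \<comment> \<open>associativity\<close>
    (\<forall>i\<in>c_obj \<I>. \<forall>j\<in>c_obj \<I>. \<forall>k\<in>c_obj \<I>. \<forall>l\<in>c_obj \<I>. \<forall>x\<in>c_obj C.
        c_comp C (pm_mu P i k l x) (pm_mu P i j k (fo (pm_obj P k l) x)) =
        c_comp C (pm_mu P i j l x) (fa (pm_obj P i j) (pm_mu P j k l x))) \<and>
    \<comment> \<open>eta dinatural: P(I,f) \<circ> eta_I = P(f,J) \<circ> eta_J for f : I \<rightarrow> J\<close>
    (\<forall>f\<in>c_arr \<I>. \<forall>x\<in>c_obj C.
        c_comp C (pm_arr P (c_id \<I> (c_dom \<I> f)) f x) (pm_eta P (c_dom \<I> f) x) =
        c_comp C (pm_arr P f (c_id \<I> (c_cod \<I> f)) x) (pm_eta P (c_cod \<I> f) x)) \<and>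
    \<comment> \<open>mu natural in I: for u : I' \<rightarrow> I, P(u,K) \<circ> mu_{I,J,K} = mu_{I',J,K} \<circ> P(u,J)P(J,K)\<close>
    (\<forall>u\<in>c_arr \<I>. \<forall>j\<in>c_obj \<I>. \<forall>k\<in>c_obj \<I>. \<forall>x\<in>c_obj C.
        c_comp C (pm_arr P u (c_id \<I> k) x) (pm_mu P (c_cod \<I> u) j k x) =
        c_comp C (pm_mu P (c_dom \<I> u) j k x) (pm_arr P u (c_id \<I> j) (fo (pm_obj P j k) x))) \<and>
    \<comment> \<open>mu natural in K: for w : K \<rightarrow> K', P(I,w) \<circ> mu_{I,J,K} = mu_{I,J,K'} \<circ> P(I,J)P(J,w)\<close>
    (\<forall>i\<in>c_obj \<I>. \<forall>j\<in>c_obj \<I>. \<forall>w\<in>c_arr \<I>. \<forall>x\<in>c_obj C.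
        c_comp C (pm_arr P (c_id \<I> i) w x) (pm_mu P i j (c_dom \<I> w) x) =
        c_comp C (pm_mu P i j (c_cod \<I> w) x) (fa (pm_obj P i j) (pm_arr P (c_id \<I> j) w x))) \<and>
    \<comment> \<open>mu dinatural in J: for g : J \<rightarrow> J',
        mu_{I,J',K} \<circ> P(I,g)P(J',K) = mu_{I,J,K} \<circ> P(I,J)P(g,K)\<close>
    (\<forall>i\<in>c_obj \<I>. \<forall>g\<in>c_arr \<I>. \<forall>k\<in>c_obj \<I>. \<forall>x\<in>c_obj C.
        c_comp C (pm_mu P i (c_cod \<I> g) k x)
                 (pm_arr P (c_id \<I> i) g (fo (pm_obj P (c_cod \<I> g) k) x)) =
        c_comp C (pm_mu P i (c_dom \<I> g) k x)
                 (fa (pm_obj P i (c_dom \<I> g)) (pm_arr P g (c_id \<I> k) x)))"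

definition pm_eq :: "('co,'ca) cat \<Rightarrow> ('io,'ia) cat \<Rightarrow> ('io,'ia,'co,'ca) pmonad \<Rightarrow> ('io,'ia,'co,'ca) pmonad \<Rightarrow> bool" where
  "pm_eq C \<I> P Q \<longleftrightarrow>
    (\<forall>i\<in>c_obj \<I>. \<forall>j\<in>c_obj \<I>.
       (\<forall>x\<in>c_obj C. fo (pm_obj P i j) x = fo (pm_obj Q i j) x) \<and>
       (\<forall>f\<in>c_arr C. fa (pm_obj P i j) f = fa (pm_obj Q i j) f)) \<and>
    (\<forall>u\<in>c_arr \<I>. \<forall>v\<in>c_arr \<I>. \<forall>x\<in>c_obj C. pm_arr P u v x = pm_arr Q u v x) \<and>
    (\<forall>i\<in>c_obj \<I>. \<forall>x\<in>c_obj C. pm_eta P i x = pm_eta Q i x) \<and>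
    (\<forall>i\<in>c_obj \<I>. \<forall>j\<in>c_obj \<I>. \<forall>k\<in>c_obj \<I>. \<forall>x\<in>c_obj C. pm_mu P i j k x = pm_mu Q i j k x)"

record ('ko,'ka,'co,'ca) cgm_gu =
  g_cat  :: "('ko,'ka) cat"
  g_T    :: "'ka \<Rightarrow> ('co,'ca) efun"
  g_eta  :: "'ko \<Rightarrow> 'co \<Rightarrow> 'ca"
  g_mu   :: "'ka \<Rightarrow> 'ka \<Rightarrow> 'co \<Rightarrow> 'ca"
  g_S    :: "'ka set"
  g_ueta :: "'ka \<Rightarrow> 'co \<Rightarrow> 'ca"

definition cat_graded_monad :: "('co,'ca) cat \<Rightarrow> ('ko,'ka,'co,'ca) cgm_gu \<Rightarrow> bool" where
  "cat_graded_monad C G \<longleftrightarrow> (let K = g_cat G in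
    category K \<and>
    (\<forall>f\<in>c_arr K. endofunctor C (g_T G f)) \<and>
    (\<forall>i\<in>c_obj K. nat_trans C Id_fun (g_T G (c_id K i)) (g_eta G i)) \<and>
    (\<forall>f\<in>c_arr K. \<forall>g\<in>c_arr K. c_cod K f = c_dom K g \<longrightarrow>
        nat_trans C (fcomp (g_T G f) (g_T G g)) (g_T G (c_comp K g f)) (g_mu G f g)) \<and>
    \<comment> \<open>unit laws, for f : I \<rightarrow> J\<close>
    (\<forall>f\<in>c_arr K. \<forall>x\<in>c_obj C.
        c_comp C (g_mu G (c_id K (c_dom K f)) f x) (g_eta G (c_dom K f) (fo (g_T G f) x))
          = c_id C (fo (g_T G f) x) \<and>
        c_comp C (g_mu G f (c_id K (c_cod K f)) x) (fa (g_T G f) (g_eta G (c_cod K f) x))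
          = c_id C (fo (g_T G f) x)) \<and>
    \<comment> \<open>associativity\<close>
    (\<forall>f\<in>c_arr K. \<forall>g\<in>c_arr K. \<forall>h\<in>c_arr K. \<forall>x\<in>c_obj C.
        c_cod K f = c_dom K g \<longrightarrow> c_cod K g = c_dom K h \<longrightarrow>
        c_comp C (g_mu G (c_comp K g f) h x) (g_mu G f g (fo (g_T G h) x)) =
        c_comp C (g_mu G f (c_comp K h g) x) (fa (g_T G f) (g_mu G g h x))))"

definition generalised_unit :: "('co,'ca) cat \<Rightarrow> ('ko,'ka,'co,'ca) cgm_gu \<Rightarrow> bool" where
  "generalised_unit C G \<longleftrightarrow> (let K = g_cat G; S = g_S G in
    \<comment> \<open>S is a wide subcategory of K\<close>
    S \<subseteq> c_arr K \<and>
    (\<forall>i\<in>c_obj K. c_id K i \<in> S) \<and>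
    (\<forall>f\<in>S. \<forall>g\<in>S. c_cod K f = c_dom K g \<longrightarrow> c_comp K g f \<in> S) \<and>
    \<comment> \<open>the generalised unit\<close>
    (\<forall>f\<in>S. nat_trans C Id_fun (g_T G f) (g_ueta G f)) \<and>
    (\<forall>f\<in>S. \<forall>g\<in>S. \<forall>x\<in>c_obj C. c_cod K f = c_dom K g \<longrightarrow>
        c_comp C (g_mu G f g x) (c_comp C (fa (g_T G f) (g_ueta G g x)) (g_ueta G f x))
          = g_ueta G (c_comp K g f) x) \<and>
    (\<forall>i\<in>c_obj K. \<forall>x\<in>c_obj C. g_ueta G (c_id K i) x = g_eta G i x))"

definition cgm_with_gu :: "('co,'ca) cat \<Rightarrow> ('ko,'ka,'co,'ca) cgm_gu \<Rightarrow> bool" where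
  "cgm_with_gu C G \<longleftrightarrow> cat_graded_monad C G \<and> generalised_unit C G"

definition cgm_eq :: "('co,'ca) cat \<Rightarrow> ('ko,'ka,'co,'ca) cgm_gu \<Rightarrow> ('ko,'ka,'co,'ca) cgm_gu \<Rightarrow> bool" where
  "cgm_eq C G H \<longleftrightarrow> (let K = g_cat G; L = g_cat H in
    c_obj K = c_obj L \<and> c_arr K = c_arr L \<and>
    (\<forall>f\<in>c_arr K. c_dom K f = c_dom L f \<and> c_cod K f = c_cod L f) \<and>
    (\<forall>i\<in>c_obj K. c_id K i = c_id L i) \<and>
    (\<forall>f\<in>c_arr K. \<forall>g\<in>c_arr K. c_cod K f = c_dom K g \<longrightarrow> c_comp K g f = c_comp L g f) \<and>
    (\<forall>f\<in>c_arr K. (\<forall>x\<in>c_obj C. fo (g_T G f) x = fo (g_T H f) x) \<and>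
                  (\<forall>a\<in>c_arr C. fa (g_T G f) a = fa (g_T H f) a)) \<and>
    (\<forall>i\<in>c_obj K. \<forall>x\<in>c_obj C. g_eta G i x = g_eta H i x) \<and>
    (\<forall>f\<in>c_arr K. \<forall>g\<in>c_arr K. \<forall>x\<in>c_obj C. c_cod K f = c_dom K g \<longrightarrow> g_mu G f g x = g_mu H f g x) \<and>
    g_S G = g_S H \<and>
    (\<forall>f\<in>g_S G. \<forall>x\<in>c_obj C. g_ueta G f x = g_ueta H f x))"

end

theory Submission
  imports Defs
begin

(* The grading category has a formal arrow i -> j for every pair of indices and, besides, a copy
   of every arrow of I; a grade i -> j is sent to P(i, j), and \<mu> and \<eta> are kept.  The copy of I
   is the wide subcategory carrying the generalised unit \<eta>bar_u = P(i, u) \<circ> \<eta>_i (u : i -> j).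
   For u : I' -> I and v : J -> J', the unit laws together with naturality of \<mu> and
   dinaturality of \<eta> give P(u, K) = \<mu> \<circ> \<eta>bar_u P(I, K) and P(I, v) = \<mu> \<circ> P(I, J) \<eta>bar_v.
   These identities yield the laws of the generalised unit and, as P(u, v) = P(I', v) \<circ> P(u, J),
   show that P can be read off from the graded monad with its generalised unit. *)

locale is_category =
  fixes C :: "('o,'a) cat"
  assumes category: "category C"
begin

lemma dom_in_obj [simp]: "f \<in> c_arr C \<Longrightarrow> c_dom C f \<in> c_obj C"
  and cod_in_obj [simp]: "f \<in> c_arr C \<Longrightarrow> c_cod C f \<in> c_obj C"
  and id_in_arr [simp]: "x \<in> c_obj C \<Longrightarrow> c_id C x \<in> c_arr C"
  and dom_id [simp]: "x \<in> c_obj C \<Longrightarrow> c_dom C (c_id C x) = x"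
  and cod_id [simp]: "x \<in> c_obj C \<Longrightarrow> c_cod C (c_id C x) = x"
  and comp_in_arr [simp]:
    "\<lbrakk>f \<in> c_arr C; g \<in> c_arr C; c_cod C f = c_dom C g\<rbrakk> \<Longrightarrow> c_comp C g f \<in> c_arr C"
  and dom_comp [simp]:
    "\<lbrakk>f \<in> c_arr C; g \<in> c_arr C; c_cod C f = c_dom C g\<rbrakk> \<Longrightarrow> c_dom C (c_comp C g f) = c_dom C f"
  and cod_comp [simp]:
    "\<lbrakk>f \<in> c_arr C; g \<in> c_arr C; c_cod C f = c_dom C g\<rbrakk> \<Longrightarrow> c_cod C (c_comp C g f) = c_cod C g"
  and comp_id_left [simp]: "f \<in> c_arr C \<Longrightarrow> c_comp C (c_id C (c_cod C f)) f = f"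
  and comp_id_right [simp]: "f \<in> c_arr C \<Longrightarrow> c_comp C f (c_id C (c_dom C f)) = f"
  and comp_assoc:
    "\<lbrakk>f \<in> c_arr C; g \<in> c_arr C; h \<in> c_arr C; c_cod C f = c_dom C g; c_cod C g = c_dom C h\<rbrakk>
     \<Longrightarrow> c_comp C h (c_comp C g f) = c_comp C (c_comp C h g) f"
  using category unfolding category_def by blast+

lemma eq_comp_via_section:
  assumes arr: "f \<in> c_arr C" "a \<in> c_arr C" "b \<in> c_arr C" "c \<in> c_arr C" "d \<in> c_arr C"
    and ends: "c_cod C b = c_dom C a" "c_cod C a = c_dom C f" "c_cod C d = c_dom C c"
    and sect: "c_comp C a b = c_id C (c_dom C f)"
    and square: "c_comp C f a = c_comp C c d"
  shows "f = c_comp C c (c_comp C d b)"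
proof -
  have "c_dom C d = c_cod C b"
    using dom_comp[of a f] dom_comp[of d c] arr ends square by simp
  then have "c_comp C c (c_comp C d b) = c_comp C (c_comp C f a) b"
    using arr ends by (simp add: square comp_assoc)
  also have "\<dots> = f"
    using arr ends by (simp add: comp_assoc[symmetric] sect)
  finally show ?thesis ..
qed

end

lemma endofunctor_obj [simp]: "endofunctor C F \<Longrightarrow> x \<in> c_obj C \<Longrightarrow> fo F x \<in> c_obj C"
  and endofunctor_arr [simp]: "endofunctor C F \<Longrightarrow> f \<in> c_arr C \<Longrightarrow> fa F f \<in> c_arr C"
  and endofunctor_dom [simp]:
    "endofunctor C F \<Longrightarrow> f \<in> c_arr C \<Longrightarrow> c_dom C (fa F f) = fo F (c_dom C f)"
  and endofunctor_cod [simp]: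
    "endofunctor C F \<Longrightarrow> f \<in> c_arr C \<Longrightarrow> c_cod C (fa F f) = fo F (c_cod C f)"
  and endofunctor_comp:
    "\<lbrakk>endofunctor C F; f \<in> c_arr C; g \<in> c_arr C; c_cod C f = c_dom C g\<rbrakk>
     \<Longrightarrow> fa F (c_comp C g f) = c_comp C (fa F g) (fa F f)"
  unfolding endofunctor_def by blast+

lemma Id_fun_simps [simp]: "fo Id_fun x = x" "fa Id_fun f = f"
  by (simp_all add: Id_fun_def)

lemma fcomp_simps [simp]: "fo (fcomp F G) x = fo F (fo G x)" "fa (fcomp F G) f = fa F (fa G f)"
  by (simp_all add: fcomp_def)

lemma nat_trans_arr [simp]: "nat_trans C F G \<alpha> \<Longrightarrow> x \<in> c_obj C \<Longrightarrow> \<alpha> x \<in> c_arr C"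
  and nat_trans_dom [simp]: "nat_trans C F G \<alpha> \<Longrightarrow> x \<in> c_obj C \<Longrightarrow> c_dom C (\<alpha> x) = fo F x"
  and nat_trans_cod [simp]: "nat_trans C F G \<alpha> \<Longrightarrow> x \<in> c_obj C \<Longrightarrow> c_cod C (\<alpha> x) = fo G x"
  and nat_trans_naturality:
    "nat_trans C F G \<alpha> \<Longrightarrow> f \<in> c_arr C
     \<Longrightarrow> c_comp C (\<alpha> (c_cod C f)) (fa F f) = c_comp C (fa G f) (\<alpha> (c_dom C f))"
  unfolding nat_trans_def by blast+

lemmas nat_trans_component = nat_trans_arr nat_trans_dom nat_trans_cod

lemma (in is_category) endofunctor_Id_fun: "endofunctor C Id_fun"
  by (simp add: endofunctor_def)

lemma (in is_category) nat_trans_vcomp: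
  assumes \<alpha>: "nat_trans C F G \<alpha>" and \<beta>: "nat_trans C G H \<beta>"
    and F: "endofunctor C F" and G: "endofunctor C G" and H: "endofunctor C H"
  shows "nat_trans C F H (\<lambda>x. c_comp C (\<beta> x) (\<alpha> x))"
  unfolding nat_trans_def
proof (intro conjI ballI)
  fix f assume f: "f \<in> c_arr C"
  have "c_comp C (c_comp C (\<beta> (c_cod C f)) (\<alpha> (c_cod C f))) (fa F f)
      = c_comp C (\<beta> (c_cod C f)) (c_comp C (fa G f) (\<alpha> (c_dom C f)))"
    using f \<alpha> \<beta> F G by (simp add: comp_assoc[symmetric] nat_trans_naturality)
  also have "\<dots> = c_comp C (fa H f) (c_comp C (\<beta> (c_dom C f)) (\<alpha> (c_dom C f)))"
    using f \<alpha> \<beta> G H by (simp add: comp_assoc nat_trans_naturality)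
  finally show "c_comp C (c_comp C (\<beta> (c_cod C f)) (\<alpha> (c_cod C f))) (fa F f)
      = c_comp C (fa H f) (c_comp C (\<beta> (c_dom C f)) (\<alpha> (c_dom C f)))" .
qed (use \<alpha> \<beta> in simp_all)

definition pm_gen_unit ::
    "('co,'ca) cat \<Rightarrow> ('io,'ia) cat \<Rightarrow> ('io,'ia,'co,'ca) pmonad \<Rightarrow> 'ia \<Rightarrow> 'co \<Rightarrow> 'ca" where
  "pm_gen_unit C I P u x = c_comp C (pm_arr P (c_id I (c_dom I u)) u x) (pm_eta P (c_dom I u) x)"

locale parameterised_monad =
  C: is_category C + I: is_category I
  for C :: "('co,'ca) cat" and I :: "('io,'ia) cat" +
  fixes P :: "('io,'ia,'co,'ca) pmonad"
  assumes param_monad: "param_monad C I P"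
begin

abbreviation comp_C (infixr "\<cdot>" 55) where "g \<cdot> f \<equiv> c_comp C g f"

lemma endofunctor_P: "i \<in> c_obj I \<Longrightarrow> j \<in> c_obj I \<Longrightarrow> endofunctor C (pm_obj P i j)"
  and nat_trans_arr_P: "u \<in> c_arr I \<Longrightarrow> v \<in> c_arr I \<Longrightarrow>
    nat_trans C (pm_obj P (c_cod I u) (c_dom I v)) (pm_obj P (c_dom I u) (c_cod I v)) (pm_arr P u v)"
  and arr_id: "i \<in> c_obj I \<Longrightarrow> j \<in> c_obj I \<Longrightarrow> x \<in> c_obj C \<Longrightarrow>
    pm_arr P (c_id I i) (c_id I j) x = c_id C (fo (pm_obj P i j) x)"
  and arr_comp: "\<lbrakk>u \<in> c_arr I; u' \<in> c_arr I; v \<in> c_arr I; v' \<in> c_arr I; x \<in> c_obj C;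
      c_cod I u' = c_dom I u; c_cod I v = c_dom I v'\<rbrakk> \<Longrightarrow>
    pm_arr P (c_comp I u u') (c_comp I v' v) x = pm_arr P u' v' x \<cdot> pm_arr P u v x"
  and nat_trans_eta: "i \<in> c_obj I \<Longrightarrow> nat_trans C Id_fun (pm_obj P i i) (pm_eta P i)"
  and nat_trans_mu: "i \<in> c_obj I \<Longrightarrow> j \<in> c_obj I \<Longrightarrow> k \<in> c_obj I \<Longrightarrow>
    nat_trans C (fcomp (pm_obj P i j) (pm_obj P j k)) (pm_obj P i k) (pm_mu P i j k)"
  and unit_left: "i \<in> c_obj I \<Longrightarrow> j \<in> c_obj I \<Longrightarrow> x \<in> c_obj C \<Longrightarrow>
    pm_mu P i i j x \<cdot> pm_eta P i (fo (pm_obj P i j) x) = c_id C (fo (pm_obj P i j) x)"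
  and unit_right: "i \<in> c_obj I \<Longrightarrow> j \<in> c_obj I \<Longrightarrow> x \<in> c_obj C \<Longrightarrow>
    pm_mu P i j j x \<cdot> fa (pm_obj P i j) (pm_eta P j x) = c_id C (fo (pm_obj P i j) x)"
  and mu_assoc: "\<lbrakk>i \<in> c_obj I; j \<in> c_obj I; k \<in> c_obj I; l \<in> c_obj I; x \<in> c_obj C\<rbrakk> \<Longrightarrow>
    pm_mu P i k l x \<cdot> pm_mu P i j k (fo (pm_obj P k l) x) =
    pm_mu P i j l x \<cdot> fa (pm_obj P i j) (pm_mu P j k l x)"
  and eta_dinatural: "f \<in> c_arr I \<Longrightarrow> x \<in> c_obj C \<Longrightarrow>
    pm_arr P (c_id I (c_dom I f)) f x \<cdot> pm_eta P (c_dom I f) x =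
    pm_arr P f (c_id I (c_cod I f)) x \<cdot> pm_eta P (c_cod I f) x"
  and mu_natural_left: "\<lbrakk>u \<in> c_arr I; j \<in> c_obj I; k \<in> c_obj I; x \<in> c_obj C\<rbrakk> \<Longrightarrow>
    pm_arr P u (c_id I k) x \<cdot> pm_mu P (c_cod I u) j k x =
    pm_mu P (c_dom I u) j k x \<cdot> pm_arr P u (c_id I j) (fo (pm_obj P j k) x)"
  and mu_natural_right: "\<lbrakk>i \<in> c_obj I; j \<in> c_obj I; w \<in> c_arr I; x \<in> c_obj C\<rbrakk> \<Longrightarrow>
    pm_arr P (c_id I i) w x \<cdot> pm_mu P i j (c_dom I w) x =
    pm_mu P i j (c_cod I w) x \<cdot> fa (pm_obj P i j) (pm_arr P (c_id I j) w x)"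
  using param_monad unfolding param_monad_def by (simp_all only: Ball_def)

lemma obj_in_obj [simp]:
  "i \<in> c_obj I \<Longrightarrow> j \<in> c_obj I \<Longrightarrow> x \<in> c_obj C \<Longrightarrow> fo (pm_obj P i j) x \<in> c_obj C"
  and fun_in_arr [simp]:
  "i \<in> c_obj I \<Longrightarrow> j \<in> c_obj I \<Longrightarrow> f \<in> c_arr C \<Longrightarrow> fa (pm_obj P i j) f \<in> c_arr C"
  and dom_fun [simp]: "i \<in> c_obj I \<Longrightarrow> j \<in> c_obj I \<Longrightarrow> f \<in> c_arr C \<Longrightarrow>
    c_dom C (fa (pm_obj P i j) f) = fo (pm_obj P i j) (c_dom C f)"
  and cod_fun [simp]: "i \<in> c_obj I \<Longrightarrow> j \<in> c_obj I \<Longrightarrow> f \<in> c_arr C \<Longrightarrow>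
    c_cod C (fa (pm_obj P i j) f) = fo (pm_obj P i j) (c_cod C f)"
  by (simp_all add: endofunctor_P)

lemma fun_comp: "\<lbrakk>i \<in> c_obj I; j \<in> c_obj I; f \<in> c_arr C; g \<in> c_arr C; c_cod C f = c_dom C g\<rbrakk>
    \<Longrightarrow> fa (pm_obj P i j) (g \<cdot> f) = fa (pm_obj P i j) g \<cdot> fa (pm_obj P i j) f"
  by (simp add: endofunctor_P endofunctor_comp)

lemma eta_in_arr [simp]: "i \<in> c_obj I \<Longrightarrow> x \<in> c_obj C \<Longrightarrow> pm_eta P i x \<in> c_arr C"
  and dom_eta [simp]: "i \<in> c_obj I \<Longrightarrow> x \<in> c_obj C \<Longrightarrow> c_dom C (pm_eta P i x) = x"
  and cod_eta [simp]:
    "i \<in> c_obj I \<Longrightarrow> x \<in> c_obj C \<Longrightarrow> c_cod C (pm_eta P i x) = fo (pm_obj P i i) x"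
  by (simp_all add: nat_trans_component[OF nat_trans_eta])

lemma mu_in_arr [simp]:
    "\<lbrakk>i \<in> c_obj I; j \<in> c_obj I; k \<in> c_obj I; x \<in> c_obj C\<rbrakk> \<Longrightarrow> pm_mu P i j k x \<in> c_arr C"
  and dom_mu [simp]: "\<lbrakk>i \<in> c_obj I; j \<in> c_obj I; k \<in> c_obj I; x \<in> c_obj C\<rbrakk> \<Longrightarrow>
    c_dom C (pm_mu P i j k x) = fo (pm_obj P i j) (fo (pm_obj P j k) x)"
  and cod_mu [simp]: "\<lbrakk>i \<in> c_obj I; j \<in> c_obj I; k \<in> c_obj I; x \<in> c_obj C\<rbrakk> \<Longrightarrow>
    c_cod C (pm_mu P i j k x) = fo (pm_obj P i k) x"
  by (simp_all add: nat_trans_component[OF nat_trans_mu])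

lemma arr_in_arr [simp]:
    "u \<in> c_arr I \<Longrightarrow> v \<in> c_arr I \<Longrightarrow> x \<in> c_obj C \<Longrightarrow> pm_arr P u v x \<in> c_arr C"
  and dom_arr [simp]: "u \<in> c_arr I \<Longrightarrow> v \<in> c_arr I \<Longrightarrow> x \<in> c_obj C \<Longrightarrow>
    c_dom C (pm_arr P u v x) = fo (pm_obj P (c_cod I u) (c_dom I v)) x"
  and cod_arr [simp]: "u \<in> c_arr I \<Longrightarrow> v \<in> c_arr I \<Longrightarrow> x \<in> c_obj C \<Longrightarrow>
    c_cod C (pm_arr P u v x) = fo (pm_obj P (c_dom I u) (c_cod I v)) x"
  by (simp_all add: nat_trans_component[OF nat_trans_arr_P])

abbreviation gen_unit :: "'ia \<Rightarrow> 'co \<Rightarrow> 'ca" where "gen_unit \<equiv> pm_gen_unit C I P"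

lemma nat_trans_gen_unit:
  assumes u: "u \<in> c_arr I"
  shows "nat_trans C Id_fun (pm_obj P (c_dom I u) (c_cod I u)) (gen_unit u)"
proof -
  have "nat_trans C (pm_obj P (c_dom I u) (c_dom I u)) (pm_obj P (c_dom I u) (c_cod I u))
      (pm_arr P (c_id I (c_dom I u)) u)"
    using nat_trans_arr_P[of "c_id I (c_dom I u)" u] u by simp
  with u show ?thesis
    unfolding pm_gen_unit_def
    by (intro C.nat_trans_vcomp[OF nat_trans_eta _ C.endofunctor_Id_fun] endofunctor_P) simp_all
qed

lemma gen_unit_in_arr [simp]: "u \<in> c_arr I \<Longrightarrow> x \<in> c_obj C \<Longrightarrow> gen_unit u x \<in> c_arr C"
  and dom_gen_unit [simp]: "u \<in> c_arr I \<Longrightarrow> x \<in> c_obj C \<Longrightarrow> c_dom C (gen_unit u x) = x"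
  and cod_gen_unit [simp]: "u \<in> c_arr I \<Longrightarrow> x \<in> c_obj C \<Longrightarrow>
    c_cod C (gen_unit u x) = fo (pm_obj P (c_dom I u) (c_cod I u)) x"
  by (simp_all add: nat_trans_component[OF nat_trans_gen_unit])

lemma gen_unit_eq_eta_cod:
  "u \<in> c_arr I \<Longrightarrow> x \<in> c_obj C \<Longrightarrow>
    gen_unit u x = pm_arr P u (c_id I (c_cod I u)) x \<cdot> pm_eta P (c_cod I u) x"
  unfolding pm_gen_unit_def by (rule eta_dinatural)

lemma gen_unit_id: "i \<in> c_obj I \<Longrightarrow> x \<in> c_obj C \<Longrightarrow> gen_unit (c_id I i) x = pm_eta P i x"
  using C.comp_id_left[of "pm_eta P i x"] by (simp add: pm_gen_unit_def arr_id)

lemma arr_left_eq_gen_unit: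
  assumes u: "u \<in> c_arr I" and k: "k \<in> c_obj I" and x: "x \<in> c_obj C"
  defines "y \<equiv> fo (pm_obj P (c_cod I u) k) x"
  shows "pm_arr P u (c_id I k) x = pm_mu P (c_dom I u) (c_cod I u) k x \<cdot> gen_unit u y"
proof -
  have "pm_arr P u (c_id I k) x
      = pm_mu P (c_dom I u) (c_cod I u) k x
        \<cdot> (pm_arr P u (c_id I (c_cod I u)) y \<cdot> pm_eta P (c_cod I u) y)"
    using u k x unfolding y_def
    by (intro C.eq_comp_via_section[where a = "pm_mu P (c_cod I u) (c_cod I u) k x"]
        mu_natural_left) (simp_all add: unit_left)
  then show ?thesis
    using u k x by (simp add: gen_unit_eq_eta_cod y_def)
qed

lemma arr_right_eq_gen_unit:
  assumes i: "i \<in> c_obj I" and v: "v \<in> c_arr I" and x: "x \<in> c_obj C"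
  shows "pm_arr P (c_id I i) v x
    = pm_mu P i (c_dom I v) (c_cod I v) x \<cdot> fa (pm_obj P i (c_dom I v)) (gen_unit v x)"
proof -
  have "pm_arr P (c_id I i) v x
      = pm_mu P i (c_dom I v) (c_cod I v) x \<cdot>
        (fa (pm_obj P i (c_dom I v)) (pm_arr P (c_id I (c_dom I v)) v x)
          \<cdot> fa (pm_obj P i (c_dom I v)) (pm_eta P (c_dom I v) x))"
    using i v x
    by (intro C.eq_comp_via_section[where a = "pm_mu P i (c_dom I v) (c_dom I v) x"]
        mu_natural_right) (simp_all add: unit_right)
  then show ?thesis
    using i v x by (simp add: pm_gen_unit_def fun_comp)
qed

lemma gen_unit_comp:
  assumes u: "u \<in> c_arr I" and v: "v \<in> c_arr I" and uv: "c_cod I u = c_dom I v"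
    and x: "x \<in> c_obj C"
  shows "pm_mu P (c_dom I u) (c_dom I v) (c_cod I v) x \<cdot>
      (fa (pm_obj P (c_dom I u) (c_dom I v)) (gen_unit v x) \<cdot> gen_unit u x)
    = gen_unit (c_comp I v u) x"
proof -
  define i where "i = c_dom I u"
  have i: "i \<in> c_obj I" using u by (simp add: i_def)
  have "pm_mu P i (c_dom I v) (c_cod I v) x \<cdot>
      (fa (pm_obj P i (c_dom I v)) (gen_unit v x) \<cdot> gen_unit u x)
    = (pm_mu P i (c_dom I v) (c_cod I v) x \<cdot> fa (pm_obj P i (c_dom I v)) (gen_unit v x))
      \<cdot> gen_unit u x"
    using i u v uv x by (simp add: C.comp_assoc i_def)
  also have "\<dots> = pm_arr P (c_id I i) v x \<cdot> (pm_arr P (c_id I i) u x \<cdot> pm_eta P i x)"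
    unfolding arr_right_eq_gen_unit[OF i v x] by (simp add: pm_gen_unit_def i_def)
  also have "\<dots> = (pm_arr P (c_id I i) v x \<cdot> pm_arr P (c_id I i) u x) \<cdot> pm_eta P i x"
    using i u v uv x by (simp add: C.comp_assoc i_def)
  also have "\<dots> = pm_arr P (c_id I i) (c_comp I v u) x \<cdot> pm_eta P i x"
    using arr_comp[of "c_id I i" "c_id I i" u v x] I.comp_id_left[of "c_id I i"] i u v uv x
    by simp
  also have "\<dots> = gen_unit (c_comp I v u) x"
    using u v uv by (simp add: pm_gen_unit_def i_def)
  finally show ?thesis
    by (simp add: i_def)
qed

lemma arr_eq_gen_unit:
  assumes u: "u \<in> c_arr I" and v: "v \<in> c_arr I" and x: "x \<in> c_obj C"
  defines "y \<equiv> fo (pm_obj P (c_cod I u) (c_dom I v)) x"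
  shows "pm_arr P u v x
    = (pm_mu P (c_dom I u) (c_dom I v) (c_cod I v) x
        \<cdot> fa (pm_obj P (c_dom I u) (c_dom I v)) (gen_unit v x))
      \<cdot> (pm_mu P (c_dom I u) (c_cod I u) (c_dom I v) x \<cdot> gen_unit u y)"
proof -
  have "pm_arr P u v x = pm_arr P (c_id I (c_dom I u)) v x \<cdot> pm_arr P u (c_id I (c_dom I v)) x"
    using arr_comp[of u "c_id I (c_dom I u)" "c_id I (c_dom I v)" v x] u v x by simp
  then show ?thesis
    using u v x by (simp add: arr_left_eq_gen_unit arr_right_eq_gen_unit y_def)
qed

end

definition pm_unit_grades :: "('io,'ia) cat \<Rightarrow> ('io \<times> 'io \<times> 'ia option) set" where
  "pm_unit_grades I = {(c_dom I u, c_cod I u, Some u) | u. u \<in> c_arr I}"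

(* A grade (i, j, t) is an arrow i -> j: the formal one if t = None, a copy of u : i -> j in I if
   t = Some u.  A composite is a copy only if both factors are. *)
definition pm_grading_cat :: "('io,'ia) cat \<Rightarrow> ('io, 'io \<times> 'io \<times> 'ia option) cat" where
  "pm_grading_cat I =
    \<lparr>c_obj = c_obj I,
     c_arr = {(i, j, None) | i j. i \<in> c_obj I \<and> j \<in> c_obj I} \<union> pm_unit_grades I,
     c_dom = (\<lambda>(i, j, t). i),
     c_cod = (\<lambda>(i, j, t). j),
     c_id = (\<lambda>i. (i, i, Some (c_id I i))),
     c_comp = (\<lambda>(_, k, t') (i, _, t).
        (i, k, case (t, t') of (Some u, Some v) \<Rightarrow> Some (c_comp I v u) | _ \<Rightarrow> None))\<rparr>"

lemma pm_grading_cat_simps [simp]: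
  "c_obj (pm_grading_cat I) = c_obj I"
  "c_dom (pm_grading_cat I) (i, j, t) = i"
  "c_cod (pm_grading_cat I) (i, j, t) = j"
  by (simp_all add: pm_grading_cat_def)

lemma category_pm_grading_cat:
  assumes "category I"
  shows "category (pm_grading_cat I)"
  using assms unfolding category_def pm_grading_cat_def pm_unit_grades_def
  by (auto split: option.splits)

definition cgm_of_pm ::
    "('co,'ca) cat \<Rightarrow> ('io,'ia) cat \<Rightarrow> ('io,'ia,'co,'ca) pmonad
     \<Rightarrow> ('io, 'io \<times> 'io \<times> 'ia option, 'co,'ca) cgm_gu" where
  "cgm_of_pm C I P =
    \<lparr>g_cat = pm_grading_cat I,
     g_T = (\<lambda>(i, j, _). pm_obj P i j),
     g_eta = pm_eta P,
     g_mu = (\<lambda>(i, j, _) (_, k, _). pm_mu P i j k),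
     g_S = pm_unit_grades I,
     g_ueta = (\<lambda>(_, _, u). pm_gen_unit C I P (the u))\<rparr>"

context parameterised_monad
begin

lemma cat_graded_monad_cgm_of_pm: "cat_graded_monad C (cgm_of_pm C I P)"
  unfolding cat_graded_monad_def Let_def
  using category_pm_grading_cat[OF I.category]
  by (auto simp: cgm_of_pm_def pm_grading_cat_def pm_unit_grades_def
      endofunctor_P nat_trans_eta nat_trans_mu unit_left unit_right mu_assoc)

lemma generalised_unit_cgm_of_pm: "generalised_unit C (cgm_of_pm C I P)"
  unfolding generalised_unit_def Let_def
  by (auto simp: cgm_of_pm_def pm_grading_cat_def pm_unit_grades_def nat_trans_gen_unit
      gen_unit_comp gen_unit_id)

end

lemma pm_eq_if_cgm_eq:
  assumes "parameterised_monad C I P" and "parameterised_monad C I Q"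
    and eq: "cgm_eq C (cgm_of_pm C I P) (cgm_of_pm C I Q)"
  shows "pm_eq C I P Q"
proof -
  interpret P: parameterised_monad C I P by fact
  interpret Q: parameterised_monad C I Q by fact
  have formal_grade: "(i, j, None) \<in> c_arr (pm_grading_cat I)"
    if "i \<in> c_obj I" "j \<in> c_obj I" for i j
    using that by (simp add: pm_grading_cat_def)
  have unit_grade: "(c_dom I u, c_cod I u, Some u) \<in> pm_unit_grades I" if "u \<in> c_arr I" for u
    using that by (auto simp: pm_unit_grades_def)
  note eq = eq[unfolded cgm_eq_def Let_def, simplified cgm_of_pm_def cgm_gu.simps]
  have obj: "fo (pm_obj P i j) x = fo (pm_obj Q i j) x"
    if "i \<in> c_obj I" "j \<in> c_obj I" "x \<in> c_obj C" for i j x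
    using eq formal_grade[OF that(1,2)] that(3) by auto
  have fmap: "fa (pm_obj P i j) f = fa (pm_obj Q i j) f"
    if "i \<in> c_obj I" "j \<in> c_obj I" "f \<in> c_arr C" for i j f
    using eq formal_grade[OF that(1,2)] that(3) by auto
  have eta: "pm_eta P i x = pm_eta Q i x" if "i \<in> c_obj I" "x \<in> c_obj C" for i x
    using eq that by auto
  have mu: "pm_mu P i j k x = pm_mu Q i j k x"
    if "i \<in> c_obj I" "j \<in> c_obj I" "k \<in> c_obj I" "x \<in> c_obj C" for i j k x
    using eq formal_grade[OF that(1,2)] formal_grade[OF that(2,3)] that(4)
    by (elim conjE) force
  have gen_unit_eq: "pm_gen_unit C I P u x = pm_gen_unit C I Q u x"
    if "u \<in> c_arr I" "x \<in> c_obj C" for u x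
    using eq unit_grade[OF that(1)] that(2) by auto
  have arr: "pm_arr P u v x = pm_arr Q u v x"
    if "u \<in> c_arr I" "v \<in> c_arr I" "x \<in> c_obj C" for u v x
    using that by (simp add: P.arr_eq_gen_unit Q.arr_eq_gen_unit obj fmap mu gen_unit_eq)
  show ?thesis
    unfolding pm_eq_def using obj fmap eta mu arr by blast
qed

theorem proposition36:
  fixes C :: "('co,'ca) cat" and \<I> :: "('io,'ia) cat"
  assumes "category C" and "category \<I>"
  shows "\<exists>\<Phi> :: ('io,'ia,'co,'ca) pmonad \<Rightarrow> ('io, 'io \<times> 'io \<times> 'ia option, 'co,'ca) cgm_gu.
           (\<forall>P. param_monad C \<I> P \<longrightarrow> cgm_with_gu C (\<Phi> P)) \<and>
           (\<forall>P Q. param_monad C \<I> P \<longrightarrow> param_monad C \<I> Q \<longrightarrow>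
                  cgm_eq C (\<Phi> P) (\<Phi> Q) \<longrightarrow> pm_eq C \<I> P Q)"
proof (intro exI[of _ "cgm_of_pm C \<I>"] conjI allI impI)
  have pm: "parameterised_monad C \<I> P" if "param_monad C \<I> P" for P
    using assms that
    by (simp add: parameterised_monad_def parameterised_monad_axioms_def is_category_def)
  fix P Q
  show "cgm_with_gu C (cgm_of_pm C \<I> P)" if "param_monad C \<I> P"
    using parameterised_monad.cat_graded_monad_cgm_of_pm[OF pm[OF that]]
      parameterised_monad.generalised_unit_cgm_of_pm[OF pm[OF that]]
    by (simp add: cgm_with_gu_def)
  show "pm_eq C \<I> P Q"
    if "param_monad C \<I> P" "param_monad C \<I> Q" "cgm_eq C (cgm_of_pm C \<I> P) (cgm_of_pm C \<I> Q)"
    using pm_eq_if_cgm_eq[OF pm pm] that by blast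
qed

end
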